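(* Let $\Bbbk$ be a field, $R=\Bbbk[x_1,\dots,x_m]$ with the standard $\mathbb Z^m$-grading, $P$ a finite poset, and $\deg\colon P\to\mathbb N^m$ a morphism of posets. Let $\widehat{\mathcal F}_\bullet$ be the homogenization of $\mathcal C_\bullet(P,\Bbbk)$ with respect to $\deg$, and let $I\subseteq R$ be the monomial ideal generated by $x^{\deg a}$ for $a$ minimal in $P$. Then $\widehat{\mathcal F}_\bullet$, augmented by the map $\widehat F_0\to I$ sending $[a]\otimes 1\mapsto x^{\deg a}$ for each minimal $a\in P$, is a free resolution of $I$ if and only if the augmented conic chain complex $\widetilde{\mathcal C}_\bullet(P_{\deg\le\alpha},\Bbbk)$ is exact for every $\alpha\in\mathbb Z^m$ such that $P_{\deg\le\alpha}$ is nonempty.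
   Context: For a finite poset $P$ and $a\in P$: $P_{\le a}=\{x: x\le a\}$, $P_{<a}=\{x:x<a\}$, $\Delta(S)$ the order complex, $d(a)=\dim\Delta(P_{\le a})$, $P^n=\{a: d(a)\le n\}$, $\Delta^n=\Delta(P^n)$ ($\Delta^{-1}=\emptyset$), faces oriented by decreasing order of vertices. Conic chain complex: $\mathcal C_n(P,\Bbbk)=H_n(\Delta^n,\Delta^{n-1};\Bbbk)=\bigoplus_{d(a)=n}H_n(\Delta(P_{\le a}),\Delta(P_{<a});\Bbbk)$ for $n\ge0$, with differential $\partial_n=\iota_{n-1}\circ\delta_n$ ($\delta_n$ the connecting map of the pair $(\Delta^n,\Delta^{n-1})$, $\iota_{n-1}\colon\widetilde H_{n-1}(\Delta^{n-1})\to H_{n-1}(\Delta^{n-1},\Delta^{n-2})$ the natural map). Note $\mathcal C_0(P,\Bbbk)=\bigoplus_{a\in P^0}\Bbbk[a]$ where $P^0$ is the set of minimal elements. The augmented conic chain complex $\widetilde{\mathcal C}_\bullet(P,\Bbbk)$ adds $\mathcal C_{-1}=\Bbbk\cdot[\,]$ (the empty face) and $\partial_0([a])=[\,]$. $\mathcal C_\bullet(P,\Bbbk)$ is $P$-graded: $F_{n,a}=H_{n}(\Delta(P_{\le a}),\Delta(P_{<a});\Bbbk)$ if $n=d(a)$ and $0$ otherwise; for $x\in F_{n,a}$ write $f_n^b(x)$ for the component of $\partial_n(x)$ in $F_{n-1,b}$ (nonzero only if $b\le a$). The homogenization with respect to $\deg$ is the complex of $\mathbb Z^m$-graded $R$-modules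 with $\widehat F_n=\bigoplus_{a\in P}F_{n,a}\otimes_\Bbbk R(-\deg a)$ and $\hat f_n(x\otimes1)=\sum_{b\le a}f_n^b(x)\otimes x^{\deg a-\deg b}$ for $x\in F_{n,a}$. For $\alpha\in\mathbb Z^m$, $P_{\deg\le\alpha}=\{x\in P:\deg x\le\alpha\}$ (componentwise order) with the induced order. *)

theory Defs
  imports Main "HOL-Library.Poly_Mapping"
begin

text \<open>Faces of the order complex: nonempty chains, listed in decreasing order
  (this fixes the orientation). The first element (hd) is the top of the chain.\<close>
definition ochains :: "'a::order set \<Rightarrow> 'a list set" where
  "ochains S = {xs. xs \<noteq> [] \<and> set xs \<subseteq> S \<and> sorted_wrt (>) xs}"

text \<open>d(a) = dim Delta(S_{\<le>a}).\<close>
definition dd :: "'a::order set \<Rightarrow> 'a \<Rightarrow> nat" where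
  "dd S a = Max (length ` ochains {x \<in> S. x \<le> a}) - 1"

text \<open>n-faces of Delta^n not in Delta^{n-1}: n-simplices whose top a has d(a) = n.\<close>
definition cells :: "'a::order set \<Rightarrow> nat \<Rightarrow> 'a list set" where
  "cells S n = {xs \<in> ochains S. length xs = Suc n \<and> dd S (hd xs) = n}"

definition remove_nth :: "nat \<Rightarrow> 'a list \<Rightarrow> 'a list" where
  "remove_nth i xs = take i xs @ drop (Suc i) xs"

definition bdryw :: "('a list \<Rightarrow> 'a list \<Rightarrow> 'r::comm_ring_1) \<Rightarrow> 'a list set
    \<Rightarrow> ('a list \<Rightarrow> 'r) \<Rightarrow> 'a list \<Rightarrow> 'r" where
  "bdryw w X c \<tau> = (\<Sum>\<sigma>\<in>X. \<Sum>i<length \<sigma>.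
      if remove_nth i \<sigma> = \<tau> then (-1) ^ i * w \<sigma> \<tau> * c \<sigma> else 0)"

text \<open>Conic chains in degree n with coefficients in K \<subseteq> 'r:
  H_n(Delta^n, Delta^{n-1}) realised as relative cycles (Delta^n has no (n+1)-faces),
  i.e. chains supported on cells S n whose boundary has no face with top of d = n.
  For K a ring R over the field, this is the tensor product C_n \<otimes> R.\<close>
definition CC :: "'a::order set \<Rightarrow> 'r::comm_ring_1 set \<Rightarrow> nat \<Rightarrow> ('a list \<Rightarrow> 'r) set" where
  "CC S K n = {c. (\<forall>\<sigma>. c \<sigma> \<noteq> 0 \<longrightarrow> \<sigma> \<in> cells S n) \<and> (\<forall>\<sigma>. c \<sigma> \<in> K) \<and>
      (\<forall>\<tau>. \<tau> \<in> ochains S \<and> length \<tau> = n \<and> dd S (hd \<tau>) = n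
              \<longrightarrow> bdryw (\<lambda>_ _. 1) (cells S n) c \<tau> = 0)}"

text \<open>Differential in degree n \<ge> 1 (connecting map followed by the natural map, i.e.
  boundary followed by projection modulo Delta^{n-2}), with weights w.\<close>
definition diffw :: "('a list \<Rightarrow> 'a list \<Rightarrow> 'r::comm_ring_1) \<Rightarrow> 'a::order set \<Rightarrow> nat
    \<Rightarrow> ('a list \<Rightarrow> 'r) \<Rightarrow> 'a list \<Rightarrow> 'r" where
  "diffw w S n c = (\<lambda>\<tau>. if \<tau> \<in> cells S (n - 1) then bdryw w (cells S n) c \<tau> else 0)"

definition aug_conic_exact :: "'a::order set \<Rightarrow> 'k::field itself \<Rightarrow> bool" where
  "aug_conic_exact S _ \<longleftrightarrow>
     (\<forall>n\<ge>1. {z \<in> CC S (UNIV::'k set) n. diffw (\<lambda>_ _. 1) S n z = (\<lambda>_. 0)}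
              = diffw (\<lambda>_ _. 1) S (Suc n) ` CC S UNIV (Suc n)) \<and>
     {z \<in> CC S (UNIV::'k set) 0. (\<Sum>\<sigma>\<in>cells S 0. z \<sigma>) = 0}
              = diffw (\<lambda>_ _. 1) S 1 ` CC S UNIV 1 \<and>
     (\<lambda>z. \<Sum>\<sigma>\<in>cells S 0. z \<sigma>) ` CC S (UNIV::'k set) 0 = UNIV"

section \<open>Polynomial ring k[x_1,...,x_m] (variables indexed 0..m-1)\<close>

type_synonym 'k mpoly = "(nat \<Rightarrow>\<^sub>0 nat) \<Rightarrow>\<^sub>0 'k"

definition polyR :: "nat \<Rightarrow> 'k::field mpoly set" where
  "polyR m = {p. \<forall>\<mu>\<in>Poly_Mapping.keys p. Poly_Mapping.keys \<mu> \<subseteq> {..<m}}"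

definition xmono :: "nat \<Rightarrow> (nat \<Rightarrow> nat) \<Rightarrow> 'k::field mpoly" where
  "xmono m \<beta> = Poly_Mapping.single (Abs_poly_mapping (\<lambda>i. if i < m then \<beta> i else 0)) 1"

definition hweight :: "nat \<Rightarrow> ('a \<Rightarrow> nat \<Rightarrow> nat) \<Rightarrow> 'a list \<Rightarrow> 'a list \<Rightarrow> 'k::field mpoly" where
  "hweight m deg \<sigma> \<tau> = xmono m (\<lambda>i. deg (hd \<sigma>) i - deg (hd \<tau>) i)"

definition minimals :: "'a::order set \<Rightarrow> 'a set" where
  "minimals P = {a \<in> P. \<forall>x\<in>P. \<not> x < a}"

definition mon_ideal :: "nat \<Rightarrow> 'a::order set \<Rightarrow> ('a \<Rightarrow> nat \<Rightarrow> nat) \<Rightarrow> 'k::field mpoly set" where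
  "mon_ideal m P deg = {(\<Sum>a\<in>minimals P. r a * xmono m (deg a)) | r. \<forall>a. r a \<in> polyR m}"

definition haug :: "nat \<Rightarrow> 'a::order set \<Rightarrow> ('a \<Rightarrow> nat \<Rightarrow> nat) \<Rightarrow> ('a list \<Rightarrow> 'k::field mpoly) \<Rightarrow> 'k mpoly" where
  "haug m P deg z = (\<Sum>\<sigma>\<in>cells P 0. z \<sigma> * xmono m (deg (hd \<sigma>)))"

definition homog_resolution :: "nat \<Rightarrow> 'a::order set \<Rightarrow> ('a \<Rightarrow> nat \<Rightarrow> nat) \<Rightarrow> 'k::field itself \<Rightarrow> bool" where
  "homog_resolution m P deg _ \<longleftrightarrow>
     (\<forall>n\<ge>1. {z \<in> CC P (polyR m :: 'k mpoly set) n. diffw (hweight m deg) P n z = (\<lambda>_. 0)}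
              = diffw (hweight m deg) P (Suc n) ` CC P (polyR m) (Suc n)) \<and>
     {z \<in> CC P (polyR m :: 'k mpoly set) 0. haug m P deg z = 0}
              = diffw (hweight m deg) P 1 ` CC P (polyR m) 1 \<and>
     haug m P deg ` CC P (polyR m :: 'k mpoly set) 0 = mon_ideal m P deg"

end

(* The homogenized complex is Z^m-graded: the basis element [sigma] \<otimes> x^gamma of a cell sigma
   with top a has degree deg a + gamma. Its strand of degree beta is therefore spanned by the cells
   whose top lies in P_{deg <= beta}, and on it every homogenization weight x^{deg a - deg b}
   contributes the coefficient 1: reading off the coefficient of x^beta is an isomorphism of the
   strand with the augmented conic complex of P_{deg <= beta}, since the conic chain complex of a
   down-closed subposet is the restriction of that of P. A multigraded complex is exact iff all its
   strands are; the augmentation maps onto I by construction, and strands with empty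
   P_{deg <= beta} vanish. *)

theory Submission
  imports Defs "HOL-Library.Function_Algebras"
begin

section \<open>Exponent vectors and the polynomial ring\<close>

definition expvec :: "nat \<Rightarrow> (nat \<Rightarrow> nat) \<Rightarrow> (nat \<Rightarrow>\<^sub>0 nat)" where
  "expvec m \<beta> = Abs_poly_mapping (\<lambda>i. if i < m then \<beta> i else 0)"

definition le_below :: "nat \<Rightarrow> (nat \<Rightarrow> nat) \<Rightarrow> (nat \<Rightarrow> nat) \<Rightarrow> bool" where
  "le_below m \<beta> \<gamma> \<longleftrightarrow> (\<forall>i<m. \<beta> i \<le> \<gamma> i)"

lemma lookup_expvec: "Poly_Mapping.lookup (expvec m \<beta>) i = (if i < m then \<beta> i else 0)"
proof -
  have "finite {i. (if i < m then \<beta> i else 0) \<noteq> 0}"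
    by (rule finite_subset[of _ "{..<m}"]) auto
  then show ?thesis unfolding expvec_def by simp
qed

lemma expvec_eq_iff: "expvec m \<beta> = expvec m \<gamma> \<longleftrightarrow> (\<forall>i<m. \<beta> i = \<gamma> i)"
  by (metis lookup_expvec poly_mapping_eqI)

lemma keys_expvec: "Poly_Mapping.keys (expvec m \<beta>) \<subseteq> {..<m}"
  by (auto simp: in_keys_iff lookup_expvec split: if_splits)

lemma expvec_lookup: "Poly_Mapping.keys \<mu> \<subseteq> {..<m} \<Longrightarrow> expvec m (Poly_Mapping.lookup \<mu>) = \<mu>"
  by (rule poly_mapping_eqI) (auto simp: lookup_expvec in_keys_iff)

lemma expvec_not_split:
  assumes "\<not> le_below m \<beta> \<gamma>" shows "expvec m \<gamma> \<noteq> expvec m \<beta> + \<nu>"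
proof
  assume eq: "expvec m \<gamma> = expvec m \<beta> + \<nu>"
  obtain i where "i < m" "\<gamma> i < \<beta> i" using assms by (auto simp: le_below_def not_le)
  moreover have "Poly_Mapping.lookup (expvec m \<gamma>) i = Poly_Mapping.lookup (expvec m \<beta>) i + Poly_Mapping.lookup \<nu> i"
    by (simp add: eq lookup_add)
  ultimately show False by (simp add: lookup_expvec)
qed

lemma xmono_eq_single: "xmono m \<beta> = Poly_Mapping.single (expvec m \<beta>) 1"
  unfolding xmono_def expvec_def ..

lemma expvec_0: "expvec m (\<lambda>_. 0) = 0"
  by (rule poly_mapping_eqI) (simp add: lookup_expvec)

lemma xmono_0: "xmono m (\<lambda>_. 0) = 1"
  by (simp add: xmono_eq_single expvec_0)

lemma lookup_single_mult_add:
  fixes p :: "'a::cancel_comm_monoid_add \<Rightarrow>\<^sub>0 'b::semiring_0"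
  shows "Poly_Mapping.lookup (Poly_Mapping.single e c * p) (e + \<nu>) = c * Poly_Mapping.lookup p \<nu>"
  by (simp add: lookup_mult lookup_single when_mult)

lemma lookup_single_mult_not_add:
  fixes p :: "'a::cancel_comm_monoid_add \<Rightarrow>\<^sub>0 'b::semiring_0"
  assumes "\<forall>\<nu>. \<mu> \<noteq> e + \<nu>"
  shows "Poly_Mapping.lookup (Poly_Mapping.single e c * p) \<mu> = 0"
  using assms by (simp add: lookup_mult lookup_single when_mult)

lemma lookup_xmono_mult:
  assumes "le_below m \<gamma> \<delta>" "le_below m \<gamma> \<beta>"
  shows "Poly_Mapping.lookup (xmono m (\<lambda>i. \<delta> i - \<gamma> i) * p) (expvec m (\<lambda>i. \<beta> i - \<gamma> i))
    = (if le_below m \<delta> \<beta> then Poly_Mapping.lookup p (expvec m (\<lambda>i. \<beta> i - \<delta> i)) else 0)"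
proof (cases "le_below m \<delta> \<beta>")
  case True
  then have "expvec m (\<lambda>i. \<beta> i - \<gamma> i) = expvec m (\<lambda>i. \<delta> i - \<gamma> i) + expvec m (\<lambda>i. \<beta> i - \<delta> i)"
    using assms(1) by (intro poly_mapping_eqI) (simp add: lookup_add lookup_expvec le_below_def)
  then show ?thesis
    using True by (simp add: xmono_eq_single lookup_single_mult_add)
next
  case False
  then obtain j where j: "j < m" "\<beta> j < \<delta> j"
    by (auto simp: le_below_def not_le)
  then have "\<not> \<delta> j - \<gamma> j \<le> \<beta> j - \<gamma> j"
    using assms(2) by (auto simp: le_below_def)
  then have "\<not> le_below m (\<lambda>i. \<delta> i - \<gamma> i) (\<lambda>i. \<beta> i - \<gamma> i)"
    using j(1) by (auto simp: le_below_def)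
  then show ?thesis
    using False expvec_not_split by (simp add: xmono_eq_single lookup_single_mult_not_add)
qed

lemma polyR_iff:
  "p \<in> polyR m \<longleftrightarrow> (\<forall>\<mu>. Poly_Mapping.lookup p \<mu> \<noteq> 0 \<longrightarrow> Poly_Mapping.keys \<mu> \<subseteq> {..<m})"
  by (auto simp: polyR_def in_keys_iff)

lemma polyR_eqI:
  assumes "p \<in> polyR m" "q \<in> polyR m"
    and "\<And>\<mu>. Poly_Mapping.keys \<mu> \<subseteq> {..<m} \<Longrightarrow> Poly_Mapping.lookup p \<mu> = Poly_Mapping.lookup q \<mu>"
  shows "p = q"
proof (rule poly_mapping_eqI)
  fix \<mu>
  show "Poly_Mapping.lookup p \<mu> = Poly_Mapping.lookup q \<mu>"
  proof (cases "Poly_Mapping.keys \<mu> \<subseteq> {..<m}")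
    case False
    then show ?thesis
      using assms(1,2) unfolding polyR_iff by metis
  qed (rule assms(3))
qed

lemma polyR_0 [simp]: "0 \<in> polyR m"
  by (simp add: polyR_def)

lemma polyR_add: "p \<in> polyR m \<Longrightarrow> q \<in> polyR m \<Longrightarrow> p + q \<in> polyR m"
  unfolding polyR_iff lookup_add by (metis add.left_neutral add.right_neutral)

lemma polyR_mult:
  assumes "p \<in> polyR m" "q \<in> polyR m" shows "p * q \<in> polyR m"
  unfolding polyR_def mem_Collect_eq
proof
  fix \<mu> assume "\<mu> \<in> Poly_Mapping.keys (p * q)"
  then obtain a b where "\<mu> = a + b" "a \<in> Poly_Mapping.keys p" "b \<in> Poly_Mapping.keys q"
    using keys_mult by blast
  then show "Poly_Mapping.keys \<mu> \<subseteq> {..<m}"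
    using assms keys_add[of a b] unfolding polyR_def by blast
qed

lemma polyR_sum: "(\<And>x. x \<in> A \<Longrightarrow> f x \<in> polyR m) \<Longrightarrow> sum f A \<in> polyR m"
  by (induction A rule: infinite_finite_induct) (auto intro: polyR_add)

lemma polyR_single_expvec: "Poly_Mapping.single (expvec m \<beta>) c \<in> polyR m"
  using keys_expvec by (auto simp: polyR_def)

lemma polyR_xmono: "xmono m \<beta> \<in> polyR m"
  by (simp add: xmono_eq_single polyR_single_expvec)

lemma polyR_1: "1 \<in> polyR m"
  using polyR_xmono[of m "\<lambda>_. 0"] by (simp add: xmono_0)

lemma polyR_neg_one_power_mult: "(-1) ^ i * p \<in> polyR m \<longleftrightarrow> p \<in> polyR m"
  by (cases "even i") (auto simp: polyR_iff)

section \<open>Chains of a finite poset\<close>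

lemma ochains_hd_in: "xs \<in> ochains S \<Longrightarrow> hd xs \<in> S"
  by (cases xs) (auto simp: ochains_def)

lemma ochains_le_hd: "xs \<in> ochains S \<Longrightarrow> x \<in> set xs \<Longrightarrow> x \<le> hd xs"
  by (cases xs) (auto simp: ochains_def)

lemma cells_subset_ochains: "cells S n \<subseteq> ochains S"
  by (auto simp: cells_def)

lemma cells_nonempty: "\<sigma> \<in> cells S n \<Longrightarrow> \<sigma> \<noteq> []"
  by (simp add: cells_def ochains_def)

lemma finite_ochains:
  assumes "finite S" shows "finite (ochains S)"
proof -
  have "ochains S \<subseteq> {xs. set xs \<subseteq> S \<and> length xs \<le> card S}"
  proof
    fix xs assume xs: "xs \<in> ochains S"
    then have "sorted_wrt (>) xs" by (simp add: ochains_def)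
    then have "distinct xs" by (induction xs) auto
    then have "length xs \<le> card S"
      using xs card_mono[OF assms] by (auto simp: ochains_def distinct_card[symmetric])
    then show "xs \<in> {xs. set xs \<subseteq> S \<and> length xs \<le> card S}"
      using xs by (simp add: ochains_def)
  qed
  then show ?thesis
    using finite_lists_length_le[OF assms] finite_subset by blast
qed

lemma finite_cells: "finite S \<Longrightarrow> finite (cells S n)"
  using finite_subset[OF cells_subset_ochains finite_ochains] .

lemma hd_remove_nth:
  assumes "\<sigma> \<in> ochains S" "remove_nth i \<sigma> = \<tau>" "\<tau> \<noteq> []"
  shows "hd \<tau> \<in> set \<sigma>" and "i = 0 \<Longrightarrow> hd \<tau> < hd \<sigma>" and "i \<noteq> 0 \<Longrightarrow> hd \<tau> = hd \<sigma>"
proof -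
  obtain h t where \<sigma>: "\<sigma> = h # t" and sorted: "sorted_wrt (>) (h # t)"
    using assms(1) by (cases \<sigma>) (auto simp: ochains_def)
  have drop_hd: "\<tau> = t" if "i = 0"
    using assms(2) \<sigma> that by (simp add: remove_nth_def drop_Suc)
  have keep_hd: "\<tau> = h # remove_nth (i - 1) t" if "i \<noteq> 0"
    using assms(2) \<sigma> that by (cases i) (simp_all add: remove_nth_def)
  show "hd \<tau> \<in> set \<sigma>"
    using assms(3) \<sigma> drop_hd keep_hd by (cases "i = 0") auto
  show "i = 0 \<Longrightarrow> hd \<tau> < hd \<sigma>"
    using assms(3) sorted \<sigma> drop_hd by auto
  show "i \<noteq> 0 \<Longrightarrow> hd \<tau> = hd \<sigma>"
    using \<sigma> keep_hd by simp
qed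

lemma dd_less:
  assumes "finite S" "x \<in> S" "y \<in> S" "x < y"
  shows "dd S x < dd S y"
proof -
  define L where "L a = length ` ochains {z \<in> S. z \<le> a}" for a
  have fin: "finite (L a)" for a
    unfolding L_def using assms(1) by (intro finite_imageI finite_ochains) auto
  have "[x] \<in> ochains {z \<in> S. z \<le> x}"
    using assms by (simp add: ochains_def)
  then have "Max (L x) \<in> L x"
    using Max_in[OF fin] by (auto simp: L_def)
  then obtain xs where xs: "xs \<in> ochains {z \<in> S. z \<le> x}" "length xs = Max (L x)"
    by (auto simp: L_def)
  have "y # xs \<in> ochains {z \<in> S. z \<le> y}"
    using xs(1) assms by (auto simp: ochains_def intro: le_less_trans)
  then have "Suc (length xs) \<in> L y"
    unfolding L_def by (rule rev_image_eqI) simp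
  then have "Suc (Max (L x)) \<le> Max (L y)"
    using Max_ge[OF fin] xs(2) by metis
  moreover have "Max (L x) \<ge> 1"
    using xs by (cases xs) (auto simp: ochains_def)
  ultimately show ?thesis
    unfolding dd_def L_def[symmetric] by linarith
qed

text \<open>Removing the top vertex of a cell lowers the dimension of the top, so a face of a cell
  of dimension n whose top also has dimension n shares its top with the cell.\<close>

lemma cells_remove_nth_hd:
  assumes "finite S" "\<sigma> \<in> cells S n" "remove_nth i \<sigma> = \<tau>" "\<tau> \<noteq> []" "dd S (hd \<tau>) = n"
  shows "hd \<tau> = hd \<sigma>"
proof (cases "i = 0")
  case True
  have \<sigma>: "\<sigma> \<in> ochains S" "dd S (hd \<sigma>) = n"
    using assms(2) by (auto simp: cells_def)
  then have "hd \<tau> \<in> S" "hd \<sigma> \<in> S" "hd \<tau> < hd \<sigma>"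
    using hd_remove_nth[OF \<sigma>(1) assms(3,4)] True ochains_hd_in by (auto simp: ochains_def)
  then show ?thesis
    using dd_less[OF assms(1)] assms(5) \<sigma>(2) by fastforce
next
  case False
  then show ?thesis
    using hd_remove_nth assms(2,3,4) cells_subset_ochains by blast
qed

lemma dd_eq_0_iff:
  assumes "finite S" "a \<in> S"
  shows "dd S a = 0 \<longleftrightarrow> a \<in> minimals S"
proof -
  define L where "L = length ` ochains {x \<in> S. x \<le> a}"
  have fin: "finite L"
    unfolding L_def using assms by (intro finite_imageI finite_ochains) auto
  have "[a] \<in> ochains {x \<in> S. x \<le> a}"
    using assms by (simp add: ochains_def)
  then have "L \<noteq> {}" unfolding L_def by blast
  have "Max L \<le> 1 \<longleftrightarrow> a \<in> minimals S"
  proof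
    assume "Max L \<le> 1"
    show "a \<in> minimals S"
      unfolding minimals_def
    proof (intro CollectI conjI ballI notI assms(2))
      fix x assume "x \<in> S" "x < a"
      then have "[a, x] \<in> ochains {x \<in> S. x \<le> a}"
        using assms by (auto simp: ochains_def)
      then have "2 \<in> L" unfolding L_def by force
      then show False
        using Max_ge[OF fin] \<open>Max L \<le> 1\<close> by fastforce
    qed
  next
    assume min: "a \<in> minimals S"
    have "l \<le> 1" if l: "l \<in> L" for l
    proof (rule ccontr)
      assume "\<not> l \<le> 1"
      obtain xs where "xs \<in> ochains {x \<in> S. x \<le> a}" "l = length xs"
        using l unfolding L_def by blast
      moreover obtain h h' t where "xs = h # h' # t"
        using \<open>\<not> l \<le> 1\<close> \<open>l = length xs\<close> by (cases xs; cases "tl xs") auto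
      ultimately have "h' < a" "h' \<in> S" by (auto simp: ochains_def)
      then show False using min by (auto simp: minimals_def)
    qed
    then show "Max L \<le> 1"
      using fin \<open>L \<noteq> {}\<close> by simp
  qed
  then show ?thesis
    unfolding dd_def L_def[symmetric] by linarith
qed

lemma cells_0:
  assumes "finite S" shows "cells S 0 = (\<lambda>a. [a]) ` minimals S"
proof -
  have "[a] \<in> cells S 0 \<longleftrightarrow> a \<in> minimals S" for a
    using dd_eq_0_iff[OF assms, of a] by (auto simp: cells_def ochains_def minimals_def)
  moreover have "\<sigma> \<in> cells S 0 \<Longrightarrow> \<exists>a. \<sigma> = [a]" for \<sigma>
    by (auto simp: cells_def length_Suc_conv)
  ultimately show ?thesis by blast
qed

definition down_closed :: "'a::order set \<Rightarrow> 'a set \<Rightarrow> bool" where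
  "down_closed Q S \<longleftrightarrow> Q \<subseteq> S \<and> (\<forall>x\<in>Q. \<forall>y\<in>S. y \<le> x \<longrightarrow> y \<in> Q)"

lemma ochains_down_closed:
  assumes "down_closed Q S" shows "ochains Q = {xs \<in> ochains S. hd xs \<in> Q}"
proof safe
  fix xs assume "xs \<in> ochains Q"
  then show "xs \<in> ochains S" "hd xs \<in> Q"
    using assms ochains_hd_in by (auto simp: ochains_def down_closed_def)
next
  fix xs assume xs: "xs \<in> ochains S" "hd xs \<in> Q"
  then have "set xs \<subseteq> Q"
    using assms ochains_le_hd[OF xs(1)] by (auto simp: down_closed_def ochains_def)
  then show "xs \<in> ochains Q"
    using xs(1) by (simp add: ochains_def)
qed

lemma dd_down_closed: "down_closed Q S \<Longrightarrow> a \<in> Q \<Longrightarrow> dd Q a = dd S a"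
  unfolding dd_def down_closed_def by (metis (lifting) subset_iff)

lemma cells_down_closed:
  assumes "down_closed Q S" shows "cells Q n = {\<sigma> \<in> cells S n. hd \<sigma> \<in> Q}"
  unfolding cells_def ochains_down_closed[OF assms] using dd_down_closed[OF assms] by auto

section \<open>Boundaries, differentials and exactness\<close>

abbreviation unit_weight :: "'a list \<Rightarrow> 'a list \<Rightarrow> 'r::comm_ring_1" where
  "unit_weight \<equiv> \<lambda>_ _. 1"

lemma bdryw_mono_neutral:
  assumes "finite X" "Y \<subseteq> X" "\<forall>\<sigma>\<in>X - Y. c \<sigma> = 0"
  shows "bdryw w X c \<tau> = bdryw w Y c \<tau>"
  unfolding bdryw_def using assms by (intro sum.mono_neutral_right) (auto intro!: sum.neutral)

lemma bdryw_cong: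
  assumes "\<And>\<sigma> i. \<sigma> \<in> X \<Longrightarrow> i < length \<sigma> \<Longrightarrow> remove_nth i \<sigma> = \<tau> \<Longrightarrow> w \<sigma> \<tau> * c \<sigma> = w' \<sigma> \<tau> * c' \<sigma>"
  shows "bdryw w X c \<tau> = bdryw w' X c' \<tau>"
  unfolding bdryw_def using assms by (intro sum.cong refl) (auto simp: mult.assoc)

lemma bdryw_zero: "bdryw w X (\<lambda>_. 0) \<tau> = 0"
  unfolding bdryw_def by (intro sum.neutral ballI) simp

lemma bdryw_add: "bdryw w X (\<lambda>\<sigma>. c \<sigma> + c' \<sigma>) \<tau> = bdryw w X c \<tau> + bdryw w X c' \<tau>"
  unfolding bdryw_def sum.distrib[symmetric] by (intro sum.cong refl) (simp add: algebra_simps)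

lemma polyR_bdryw:
  assumes "\<And>\<sigma>. w \<sigma> \<tau> \<in> polyR m" "\<And>\<sigma>. c \<sigma> \<in> polyR m"
  shows "bdryw w X c \<tau> \<in> polyR m"
  unfolding bdryw_def using assms
  by (intro polyR_sum) (simp add: mult.assoc polyR_neg_one_power_mult polyR_mult)

text \<open>Unlike diffw, the differential below is also defined in degree 0, where the only target
  face is the empty face and the map is the augmentation.\<close>

definition aug_cells :: "'a::order set \<Rightarrow> nat \<Rightarrow> 'a list set" where
  "aug_cells S n = (if n = 0 then {[]} else cells S (n - 1))"

definition aug_diff :: "('a list \<Rightarrow> 'a list \<Rightarrow> 'r::comm_ring_1) \<Rightarrow> 'a::order set \<Rightarrow> nat
    \<Rightarrow> ('a list \<Rightarrow> 'r) \<Rightarrow> 'a list \<Rightarrow> 'r" where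
  "aug_diff w S n c = (\<lambda>\<tau>. if \<tau> \<in> aug_cells S n then bdryw w (cells S n) c \<tau> else 0)"

definition cycles :: "'r::comm_ring_1 set \<Rightarrow> ('a list \<Rightarrow> 'a list \<Rightarrow> 'r) \<Rightarrow> 'a::order set \<Rightarrow> nat
    \<Rightarrow> ('a list \<Rightarrow> 'r) set" where
  "cycles K w S n = {z \<in> CC S K n. aug_diff w S n z = (\<lambda>_. 0)}"

definition boundaries :: "'r::comm_ring_1 set \<Rightarrow> ('a list \<Rightarrow> 'a list \<Rightarrow> 'r) \<Rightarrow> 'a::order set \<Rightarrow> nat
    \<Rightarrow> ('a list \<Rightarrow> 'r) set" where
  "boundaries K w S n = aug_diff w S (Suc n) ` CC S K (Suc n)"

definition exact_at :: "'r::comm_ring_1 set \<Rightarrow> ('a list \<Rightarrow> 'a list \<Rightarrow> 'r) \<Rightarrow> 'a::order set \<Rightarrow> nat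
    \<Rightarrow> bool" where
  "exact_at K w S n \<longleftrightarrow> cycles K w S n = boundaries K w S n"

lemma aug_diff_zero: "aug_diff w S n (\<lambda>_. 0) = (\<lambda>_. 0)"
  unfolding aug_diff_def bdryw_zero by simp

lemma diffw_eq_aug_diff: "n \<ge> 1 \<Longrightarrow> diffw w S n = aug_diff w S n"
  by (intro ext) (simp add: diffw_def aug_diff_def aug_cells_def)

lemma aug_diff_0_eq_zero_iff:
  "aug_diff w S 0 z = (\<lambda>_. 0) \<longleftrightarrow> (\<Sum>\<sigma>\<in>cells S 0. w \<sigma> [] * z \<sigma>) = 0"
proof -
  have "bdryw w (cells S 0) z [] = (\<Sum>\<sigma>\<in>cells S 0. w \<sigma> [] * z \<sigma>)"
    unfolding bdryw_def
  proof (rule sum.cong[OF refl])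
    fix \<sigma> assume "\<sigma> \<in> cells S 0"
    then obtain a where "\<sigma> = [a]" by (auto simp: cells_def length_Suc_conv)
    then show "(\<Sum>i<length \<sigma>. if remove_nth i \<sigma> = [] then (-1) ^ i * w \<sigma> [] * z \<sigma> else 0)
        = w \<sigma> [] * z \<sigma>"
      by (simp add: remove_nth_def)
  qed
  then show ?thesis by (auto simp: aug_diff_def aug_cells_def fun_eq_iff)
qed

lemma aug_diff_Suc_support: "aug_diff w S (Suc n) c \<tau> \<noteq> 0 \<Longrightarrow> \<tau> \<in> cells S n"
  by (auto simp: aug_diff_def aug_cells_def split: if_splits)

lemma CC_support: "c \<in> CC S K n \<Longrightarrow> c \<sigma> \<noteq> 0 \<Longrightarrow> \<sigma> \<in> cells S n"
  by (simp add: CC_def)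

lemma CC_zero: "0 \<in> K \<Longrightarrow> (\<lambda>_. 0) \<in> CC S K n"
  by (simp add: CC_def bdryw_zero)

lemma CC_add:
  assumes "c \<in> CC S (polyR m) n" "c' \<in> CC S (polyR m) n"
  shows "c + c' \<in> CC S (polyR m) n"
  unfolding CC_def mem_Collect_eq plus_fun_def
proof (intro conjI allI impI)
  fix \<sigma> assume "c \<sigma> + c' \<sigma> \<noteq> 0"
  then show "\<sigma> \<in> cells S n"
    using CC_support[OF assms(1)] CC_support[OF assms(2)] by (metis add.right_neutral)
qed (use assms in \<open>auto simp: CC_def polyR_add bdryw_add\<close>)

lemma CC_sum:
  assumes "finite B" "\<And>b. b \<in> B \<Longrightarrow> f b \<in> CC S (polyR m) n"
  shows "(\<Sum>b\<in>B. f b) \<in> CC S (polyR m) n"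
  using assms
  by (induction B rule: finite_induct) (auto simp: zero_fun_def intro: CC_zero CC_add)

lemma exact_at_empty: "exact_at (UNIV :: 'k::field set) unit_weight ({} :: 'a::order set) n"
proof -
  have "CC ({} :: 'a set) (UNIV :: 'k set) k = {\<lambda>_. 0}" for k
    by (auto simp: CC_def cells_def ochains_def fun_eq_iff bdryw_zero)
  then show ?thesis
    by (auto simp: exact_at_def cycles_def boundaries_def aug_diff_zero)
qed

lemma all_nat_iff_0_and_ge_1: "(\<forall>n::nat. Q n) \<longleftrightarrow> Q 0 \<and> (\<forall>n\<ge>1. Q n)"
  by (metis less_one not_le)

lemma aug_conic_exact_iff:
  assumes "finite S" "S \<noteq> {}"
  shows "aug_conic_exact S TYPE('k::field) \<longleftrightarrow> (\<forall>n. exact_at (UNIV :: 'k set) unit_weight S n)"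
proof -
  obtain a where "a \<in> S" "\<forall>x\<in>S. x \<le> a \<longrightarrow> a = x"
    using finite_has_minimal[OF assms] by blast
  then have "a \<in> minimals S"
    unfolding minimals_def using less_le by auto
  then have a: "[a] \<in> cells S 0" using cells_0[OF assms(1)] by blast
  have "c \<in> (\<lambda>z. \<Sum>\<sigma>\<in>cells S 0. z \<sigma>) ` CC S (UNIV :: 'k set) 0" for c
  proof
    show "(\<lambda>\<sigma>. if \<sigma> = [a] then c else 0) \<in> CC S UNIV 0"
      using a by (auto simp: CC_def ochains_def)
    show "c = (\<Sum>\<sigma>\<in>cells S 0. if \<sigma> = [a] then c else 0)"
      using a finite_cells[OF assms(1)] by simp
  qed
  then have augmentation_onto: "(\<lambda>z. \<Sum>\<sigma>\<in>cells S 0. z \<sigma>) ` CC S (UNIV :: 'k set) 0 = UNIV"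
    by blast
  have "aug_conic_exact S TYPE('k) \<longleftrightarrow>
      exact_at (UNIV :: 'k set) unit_weight S 0 \<and> (\<forall>n\<ge>1. exact_at (UNIV :: 'k set) unit_weight S n)"
    unfolding aug_conic_exact_def exact_at_def cycles_def boundaries_def aug_diff_0_eq_zero_iff
    by (simp add: augmentation_onto diffw_eq_aug_diff conj_commute)
  then show ?thesis
    by (simp only: all_nat_iff_0_and_ge_1[symmetric])
qed

lemma haug_image:
  assumes "finite P"
  shows "haug m P deg ` CC P (polyR m :: 'k::field mpoly set) 0 = mon_ideal m P deg"
proof -
  have haug_eq: "haug m P deg z = (\<Sum>a\<in>minimals P. z [a] * xmono m (deg a))" for z :: "_ \<Rightarrow> 'k mpoly"
    unfolding haug_def cells_0[OF assms] by (subst sum.reindex) (auto simp: inj_on_def)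
  show ?thesis
  proof (intro equalityI subsetI)
    fix p :: "'k mpoly" assume "p \<in> haug m P deg ` CC P (polyR m) 0"
    then obtain z where z: "z \<in> CC P (polyR m) 0" and "p = haug m P deg z" by blast
    then have "p = (\<Sum>a\<in>minimals P. z [a] * xmono m (deg a))"
      using haug_eq by simp
    then show "p \<in> mon_ideal m P deg"
      using z unfolding mon_ideal_def by (auto simp: CC_def)
  next
    fix p :: "'k mpoly" assume "p \<in> mon_ideal m P deg"
    then obtain r where r: "\<And>a. r a \<in> polyR m" "p = (\<Sum>a\<in>minimals P. r a * xmono m (deg a))"
      by (auto simp: mon_ideal_def)
    define z where "z \<sigma> = (if \<sigma> \<in> cells P 0 then r (hd \<sigma>) else 0)" for \<sigma>
    have "z \<in> CC P (polyR m) 0"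
      using r(1) by (auto simp: CC_def z_def ochains_def)
    moreover have "haug m P deg z = p"
      unfolding haug_eq r(2) cells_0[OF assms] z_def by auto
    ultimately show "p \<in> haug m P deg ` CC P (polyR m) 0" by blast
  qed
qed

section \<open>Strands of the homogenized complex\<close>

locale monotone_degree =
  fixes P :: "'a::order set" and m :: nat and deg :: "'a \<Rightarrow> nat \<Rightarrow> nat"
  assumes finite_P: "finite P"
    and deg_mono: "a \<in> P \<Longrightarrow> b \<in> P \<Longrightarrow> a \<le> b \<Longrightarrow> le_below m (deg a) (deg b)"
begin

text \<open>The empty face gets degree 0, so that hom_weight [a] [] is the augmentation coefficient
  x^(deg a).\<close>

definition top_deg :: "'a list \<Rightarrow> nat \<Rightarrow> nat" where
  "top_deg \<sigma> = (if \<sigma> = [] then (\<lambda>_. 0) else deg (hd \<sigma>))"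

definition hom_weight :: "'a list \<Rightarrow> 'a list \<Rightarrow> 'k::field mpoly" where
  "hom_weight \<sigma> \<tau> = xmono m (\<lambda>i. top_deg \<sigma> i - top_deg \<tau> i)"

definition sublevel :: "(nat \<Rightarrow> nat) \<Rightarrow> 'a set" where
  "sublevel \<beta> = {x \<in> P. le_below m (deg x) \<beta>}"

text \<open>The degree-beta strand of a chain C records, at each cell sigma, the coefficient of x^beta
  in [sigma] \<otimes> C sigma, i.e. that of x^(beta - top_deg sigma) in C sigma; lift is its inverse on
  chains supported on the sublevel set of beta.\<close>

definition strand :: "(nat \<Rightarrow> nat) \<Rightarrow> ('a list \<Rightarrow> 'k::field mpoly) \<Rightarrow> 'a list \<Rightarrow> 'k" where
  "strand \<beta> C \<sigma> =
    (if le_below m (top_deg \<sigma>) \<beta> then Poly_Mapping.lookup (C \<sigma>) (expvec m (\<lambda>i. \<beta> i - top_deg \<sigma> i)) else 0)"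

definition lift :: "(nat \<Rightarrow> nat) \<Rightarrow> ('a list \<Rightarrow> 'k::field) \<Rightarrow> 'a list \<Rightarrow> 'k mpoly" where
  "lift \<beta> z \<sigma> =
    (if le_below m (top_deg \<sigma>) \<beta> then Poly_Mapping.single (expvec m (\<lambda>i. \<beta> i - top_deg \<sigma> i)) (z \<sigma>) else 0)"

lemma sublevel_down_closed: "down_closed (sublevel \<beta>) P"
  using deg_mono unfolding down_closed_def sublevel_def le_below_def by (auto; meson le_trans)

lemma finite_sublevel: "finite (sublevel \<beta>)"
  using finite_P by (simp add: sublevel_def)

lemma cells_sublevel: "cells (sublevel \<beta>) n = {\<sigma> \<in> cells P n. le_below m (top_deg \<sigma>) \<beta>}"
proof -
  have "\<sigma> \<in> cells P n \<Longrightarrow> hd \<sigma> \<in> sublevel \<beta> \<longleftrightarrow> le_below m (top_deg \<sigma>) \<beta>" for \<sigma>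
    using cells_subset_ochains ochains_hd_in cells_nonempty by (fastforce simp: sublevel_def top_deg_def)
  then show ?thesis
    using cells_down_closed[OF sublevel_down_closed] by blast
qed

lemma aug_cells_sublevel: "aug_cells (sublevel \<beta>) n = {\<tau> \<in> aug_cells P n. le_below m (top_deg \<tau>) \<beta>}"
  by (auto simp: aug_cells_def cells_sublevel top_deg_def le_below_def)

lemma top_deg_remove_nth:
  assumes "\<sigma> \<in> ochains P" "remove_nth i \<sigma> = \<tau>"
  shows "le_below m (top_deg \<tau>) (top_deg \<sigma>)"
proof (cases "\<tau> = []")
  case False
  have "hd \<tau> \<le> hd \<sigma>" "hd \<tau> \<in> P" "hd \<sigma> \<in> P"
    using hd_remove_nth(1)[OF assms False] ochains_le_hd[OF assms(1)] ochains_hd_in[OF assms(1)]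
      assms(1) by (auto simp: ochains_def)
  then show ?thesis
    using False assms(1) deg_mono by (auto simp: top_deg_def ochains_def)
qed (simp add: top_deg_def le_below_def)

lemma strand_outside_sublevel:
  assumes "\<And>\<sigma>. C \<sigma> \<noteq> 0 \<Longrightarrow> \<sigma> \<in> cells P n" "\<sigma> \<notin> cells (sublevel \<beta>) n"
  shows "strand \<beta> C \<sigma> = 0"
  using assms by (cases "C \<sigma> = 0") (auto simp: strand_def cells_sublevel)

lemma bdryw_strand_sublevel:
  assumes "\<And>\<sigma>. C \<sigma> \<noteq> 0 \<Longrightarrow> \<sigma> \<in> cells P n"
  shows "bdryw w (cells P n) (strand \<beta> C) \<tau> = bdryw w (cells (sublevel \<beta>) n) (strand \<beta> C) \<tau>"
  using strand_outside_sublevel[OF assms] finite_cells[OF finite_P]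
  by (intro bdryw_mono_neutral) (auto simp: cells_sublevel)

lemma lookup_bdryw_hom_weight:
  fixes C :: "'a list \<Rightarrow> 'k::field mpoly"
  assumes "X \<subseteq> ochains P" "le_below m (top_deg \<tau>) \<beta>"
  shows "Poly_Mapping.lookup (bdryw hom_weight X C \<tau>) (expvec m (\<lambda>i. \<beta> i - top_deg \<tau> i))
    = bdryw unit_weight X (strand \<beta> C) \<tau>"
  unfolding bdryw_def lookup_sum
proof (intro sum.cong refl)
  fix \<sigma> i assume "\<sigma> \<in> X"
  show "Poly_Mapping.lookup (if remove_nth i \<sigma> = \<tau> then (-1) ^ i * hom_weight \<sigma> \<tau> * C \<sigma> else 0)
      (expvec m (\<lambda>i. \<beta> i - top_deg \<tau> i))
    = (if remove_nth i \<sigma> = \<tau> then (-1) ^ i * 1 * strand \<beta> C \<sigma> else 0)"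
  proof (cases "remove_nth i \<sigma> = \<tau>")
    case True
    then have le: "le_below m (top_deg \<tau>) (top_deg \<sigma>)"
      using top_deg_remove_nth \<open>\<sigma> \<in> X\<close> assms(1) by blast
    have "Poly_Mapping.lookup (hom_weight \<sigma> \<tau> * C \<sigma>) (expvec m (\<lambda>i. \<beta> i - top_deg \<tau> i))
        = strand \<beta> C \<sigma>"
      using lookup_xmono_mult[OF le assms(2), of "C \<sigma>"] by (simp add: hom_weight_def strand_def)
    then show ?thesis
      using True by (cases "even i") (simp_all add: mult.assoc)
  qed simp
qed

lemma strand_aug_diff:
  fixes C :: "'a list \<Rightarrow> 'k::field mpoly"
  assumes "\<And>\<sigma>. C \<sigma> \<noteq> 0 \<Longrightarrow> \<sigma> \<in> cells P n"
  shows "strand \<beta> (aug_diff hom_weight P n C) = aug_diff unit_weight (sublevel \<beta>) n (strand \<beta> C)"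
proof
  fix \<tau>
  show "strand \<beta> (aug_diff hom_weight P n C) \<tau> = aug_diff unit_weight (sublevel \<beta>) n (strand \<beta> C) \<tau>"
  proof (cases "\<tau> \<in> aug_cells P n \<and> le_below m (top_deg \<tau>) \<beta>")
    case True
    then have "strand \<beta> (aug_diff hom_weight P n C) \<tau>
        = Poly_Mapping.lookup (bdryw hom_weight (cells P n) C \<tau>) (expvec m (\<lambda>i. \<beta> i - top_deg \<tau> i))"
      by (simp add: strand_def aug_diff_def)
    also have "\<dots> = bdryw unit_weight (cells P n) (strand \<beta> C) \<tau>"
      using True lookup_bdryw_hom_weight[OF cells_subset_ochains] by blast
    also have "\<dots> = aug_diff unit_weight (sublevel \<beta>) n (strand \<beta> C) \<tau>"
      using True by (simp add: aug_diff_def aug_cells_sublevel bdryw_strand_sublevel[OF assms])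
    finally show ?thesis .
  next
    case False
    then show ?thesis
      by (auto simp: strand_def aug_diff_def aug_cells_sublevel)
  qed
qed

lemma bdryw_unit_weight_eq_hom_weight:
  fixes C :: "'a list \<Rightarrow> 'k::field mpoly"
  assumes "\<tau> \<in> ochains P" "dd P (hd \<tau>) = n"
  shows "bdryw unit_weight (cells P n) C \<tau> = bdryw hom_weight (cells P n) C \<tau>"
proof (rule bdryw_cong)
  fix \<sigma> i assume "\<sigma> \<in> cells P n" "remove_nth i \<sigma> = \<tau>"
  moreover have "\<tau> \<noteq> []" using assms(1) by (simp add: ochains_def)
  ultimately have "hd \<tau> = hd \<sigma>" "\<sigma> \<noteq> []"
    using cells_remove_nth_hd[OF finite_P] assms(2) cells_nonempty by blast+
  then show "1 * C \<sigma> = hom_weight \<sigma> \<tau> * C \<sigma>"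
    using \<open>\<tau> \<noteq> []\<close> by (simp add: hom_weight_def top_deg_def xmono_0)
qed

lemma lookup_bdryw_unit_weight:
  fixes C :: "'a list \<Rightarrow> 'k::field mpoly"
  assumes "\<And>\<sigma>. C \<sigma> \<noteq> 0 \<Longrightarrow> \<sigma> \<in> cells P n" "\<tau> \<in> ochains P" "dd P (hd \<tau>) = n"
    "le_below m (top_deg \<tau>) \<beta>"
  shows "Poly_Mapping.lookup (bdryw unit_weight (cells P n) C \<tau>) (expvec m (\<lambda>i. \<beta> i - top_deg \<tau> i))
     = bdryw unit_weight (cells (sublevel \<beta>) n) (strand \<beta> C) \<tau>"
  unfolding bdryw_unit_weight_eq_hom_weight[OF assms(2,3)]
    lookup_bdryw_hom_weight[OF cells_subset_ochains assms(4)]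
  by (rule bdryw_strand_sublevel[OF assms(1)])

lemma ochains_sublevel_iff:
  "\<tau> \<in> ochains (sublevel \<beta>) \<longleftrightarrow> \<tau> \<in> ochains P \<and> le_below m (top_deg \<tau>) \<beta>"
  unfolding ochains_down_closed[OF sublevel_down_closed] using ochains_hd_in[of \<tau> P]
  by (auto simp: sublevel_def top_deg_def ochains_def)

lemma dd_sublevel: "\<tau> \<in> ochains (sublevel \<beta>) \<Longrightarrow> dd (sublevel \<beta>) (hd \<tau>) = dd P (hd \<tau>)"
  by (metis dd_down_closed ochains_hd_in sublevel_down_closed)

lemma strand_CC:
  fixes C :: "'a list \<Rightarrow> 'k::field mpoly"
  assumes "C \<in> CC P (polyR m) n"
  shows "strand \<beta> C \<in> CC (sublevel \<beta>) UNIV n"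
  unfolding CC_def mem_Collect_eq
proof (intro conjI allI impI)
  fix \<sigma> assume "strand \<beta> C \<sigma> \<noteq> 0"
  then show "\<sigma> \<in> cells (sublevel \<beta>) n"
    using strand_outside_sublevel CC_support[OF assms] by blast
next
  fix \<tau> assume \<tau>: "\<tau> \<in> ochains (sublevel \<beta>) \<and> length \<tau> = n \<and> dd (sublevel \<beta>) (hd \<tau>) = n"
  then have \<tau>P: "\<tau> \<in> ochains P" "dd P (hd \<tau>) = n" and le: "le_below m (top_deg \<tau>) \<beta>"
    using ochains_sublevel_iff dd_sublevel by auto
  have supp: "\<And>\<sigma>. C \<sigma> \<noteq> 0 \<Longrightarrow> \<sigma> \<in> cells P n"
    using CC_support[OF assms] .
  have "bdryw unit_weight (cells (sublevel \<beta>) n) (strand \<beta> C) \<tau>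
      = Poly_Mapping.lookup (bdryw unit_weight (cells P n) C \<tau>) (expvec m (\<lambda>i. \<beta> i - top_deg \<tau> i))"
    using lookup_bdryw_unit_weight[where C = C, OF supp \<tau>P le] by simp
  also have "\<dots> = 0"
    using assms \<tau> \<tau>P by (simp add: CC_def)
  finally show "bdryw unit_weight (cells (sublevel \<beta>) n) (strand \<beta> C) \<tau> = 0" .
qed simp

lemma CC_of_strands:
  fixes C :: "'a list \<Rightarrow> 'k::field mpoly"
  assumes "\<And>\<sigma>. C \<sigma> \<in> polyR m" "\<And>\<sigma>. C \<sigma> \<noteq> 0 \<Longrightarrow> \<sigma> \<in> cells P n"
    and "\<And>\<beta>. strand \<beta> C \<in> CC (sublevel \<beta>) UNIV n"
  shows "C \<in> CC P (polyR m) n"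
  unfolding CC_def mem_Collect_eq
proof (intro conjI allI impI)
  fix \<tau> assume \<tau>: "\<tau> \<in> ochains P \<and> length \<tau> = n \<and> dd P (hd \<tau>) = n"
  show "bdryw unit_weight (cells P n) C \<tau> = 0"
  proof (rule polyR_eqI)
    fix \<mu> :: "nat \<Rightarrow>\<^sub>0 nat" assume keys: "Poly_Mapping.keys \<mu> \<subseteq> {..<m}"
    define \<beta> where "\<beta> i = top_deg \<tau> i + Poly_Mapping.lookup \<mu> i" for i
    have le: "le_below m (top_deg \<tau>) \<beta>" and "expvec m (\<lambda>i. \<beta> i - top_deg \<tau> i) = \<mu>"
      using expvec_lookup[OF keys] by (simp_all add: le_below_def \<beta>_def)
    then have "Poly_Mapping.lookup (bdryw unit_weight (cells P n) C \<tau>) \<mu>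
        = bdryw unit_weight (cells (sublevel \<beta>) n) (strand \<beta> C) \<tau>"
      using lookup_bdryw_unit_weight[where C = C, OF assms(2) _ _ le] \<tau> by simp
    also have "\<dots> = 0"
      using assms(3)[of \<beta>] \<tau> le by (simp add: CC_def ochains_sublevel_iff dd_sublevel)
    finally show "Poly_Mapping.lookup (bdryw unit_weight (cells P n) C \<tau>) \<mu> = Poly_Mapping.lookup 0 \<mu>"
      by simp
  qed (use assms(1) polyR_1 in \<open>auto intro: polyR_bdryw\<close>)
qed (use assms in auto)

lemma CC_sublevel_support: "z \<in> CC (sublevel \<beta>) K n \<Longrightarrow> z \<sigma> \<noteq> 0 \<Longrightarrow> le_below m (top_deg \<sigma>) \<beta>"
  using CC_support cells_sublevel by blast

lemma strand_zero: "strand \<beta> (\<lambda>_. 0 :: 'k::field mpoly) = (\<lambda>_. 0)"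
  by (simp add: strand_def fun_eq_iff)

lemma strand_add: "strand \<beta> (C + C') = strand \<beta> C + strand \<beta> C'"
  by (simp add: strand_def lookup_add fun_eq_iff)

lemma strand_sum: "strand \<beta> (\<Sum>b\<in>B. f b) = (\<Sum>b\<in>B. strand \<beta> (f b))"
proof (induction B rule: infinite_finite_induct)
  case (insert b B)
  then show ?case by (simp only: sum.insert[OF insert(1,2)] strand_add)
qed (simp_all add: zero_fun_def strand_zero)

lemma strand_cong:
  assumes "\<forall>i<m. \<beta> i = \<beta>' i" shows "strand \<beta> = strand \<beta>'"
proof -
  have "le_below m f \<beta> \<longleftrightarrow> le_below m f \<beta>'" "expvec m (\<lambda>i. \<beta> i - f i) = expvec m (\<lambda>i. \<beta>' i - f i)"
    for f using assms by (simp_all add: le_below_def expvec_eq_iff)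
  then show ?thesis
    by (intro ext) (simp add: strand_def)
qed

lemma sublevel_cong: "\<forall>i<m. \<beta> i = \<beta>' i \<Longrightarrow> sublevel \<beta> = sublevel \<beta>'"
  by (simp add: sublevel_def le_below_def)

lemma strand_lift:
  assumes "\<And>\<sigma>. z \<sigma> \<noteq> 0 \<Longrightarrow> le_below m (top_deg \<sigma>) \<beta>"
  shows "strand \<beta>' (lift \<beta> z) = (if \<forall>i<m. \<beta> i = \<beta>' i then z else (\<lambda>_. 0))"
proof
  fix \<sigma>
  show "strand \<beta>' (lift \<beta> z) \<sigma> = (if \<forall>i<m. \<beta> i = \<beta>' i then z else (\<lambda>_. 0)) \<sigma>"
  proof (cases "z \<sigma> = 0")
    case False
    then have le: "le_below m (top_deg \<sigma>) \<beta>" using assms by blast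
    have "le_below m (top_deg \<sigma>) \<beta>' \<and>
        expvec m (\<lambda>i. \<beta> i - top_deg \<sigma> i) = expvec m (\<lambda>i. \<beta>' i - top_deg \<sigma> i)
      \<longleftrightarrow> (\<forall>i<m. \<beta> i = \<beta>' i)"
    proof (intro iffI allI impI)
      fix i assume "i < m" and
        "le_below m (top_deg \<sigma>) \<beta>' \<and>
          expvec m (\<lambda>i. \<beta> i - top_deg \<sigma> i) = expvec m (\<lambda>i. \<beta>' i - top_deg \<sigma> i)"
      then have "top_deg \<sigma> i \<le> \<beta>' i" "\<beta> i - top_deg \<sigma> i = \<beta>' i - top_deg \<sigma> i"
        by (auto simp: le_below_def expvec_eq_iff)
      moreover have "top_deg \<sigma> i \<le> \<beta> i"
        using le \<open>i < m\<close> by (simp add: le_below_def)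
      ultimately show "\<beta> i = \<beta>' i" by linarith
    qed (use le in \<open>auto simp: le_below_def expvec_eq_iff\<close>)
    with le show ?thesis
      by (auto simp: strand_def lift_def lookup_single)
  qed (simp add: strand_def lift_def)
qed

lemma strand_lift_same:
  "(\<And>\<sigma>. z \<sigma> \<noteq> 0 \<Longrightarrow> le_below m (top_deg \<sigma>) \<beta>) \<Longrightarrow> strand \<beta> (lift \<beta> z) = z"
  by (simp add: strand_lift)

lemma polyR_lift: "lift \<beta> z \<sigma> \<in> polyR m"
  by (simp add: lift_def polyR_single_expvec)

lemma lift_eq_0: "z \<sigma> = 0 \<Longrightarrow> lift \<beta> z \<sigma> = 0"
  unfolding lift_def by simp

lemma poly_chain_eqI:
  fixes C C' :: "'a list \<Rightarrow> 'k::field mpoly"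
  assumes "\<And>\<sigma>. C \<sigma> \<in> polyR m" "\<And>\<sigma>. C' \<sigma> \<in> polyR m" "\<And>\<beta>. strand \<beta> C = strand \<beta> C'"
  shows "C = C'"
proof (intro ext polyR_eqI)
  fix \<sigma> and \<mu> :: "nat \<Rightarrow>\<^sub>0 nat" assume keys: "Poly_Mapping.keys \<mu> \<subseteq> {..<m}"
  define \<beta> where "\<beta> i = top_deg \<sigma> i + Poly_Mapping.lookup \<mu> i" for i
  have "le_below m (top_deg \<sigma>) \<beta>" "expvec m (\<lambda>i. \<beta> i - top_deg \<sigma> i) = \<mu>"
    using expvec_lookup[OF keys] by (simp_all add: le_below_def \<beta>_def)
  then show "Poly_Mapping.lookup (C \<sigma>) \<mu> = Poly_Mapping.lookup (C' \<sigma>) \<mu>"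
    using fun_cong[OF assms(3)[of \<beta>], of \<sigma>] by (simp add: strand_def)
qed (use assms in auto)

lemma polyR_aug_diff:
  fixes C :: "'a list \<Rightarrow> 'k::field mpoly"
  shows "(\<And>\<sigma>. C \<sigma> \<in> polyR m) \<Longrightarrow> aug_diff hom_weight P n C \<tau> \<in> polyR m"
  by (simp add: aug_diff_def hom_weight_def polyR_bdryw polyR_xmono)

lemma lift_CC:
  assumes "z \<in> CC (sublevel \<beta>) UNIV n"
  shows "lift \<beta> z \<in> CC P (polyR m) n"
proof (rule CC_of_strands)
  show "lift \<beta> z \<sigma> \<noteq> 0 \<Longrightarrow> \<sigma> \<in> cells P n" for \<sigma>
    using CC_support[OF assms] lift_eq_0 cells_sublevel by blast
  show "strand \<beta>' (lift \<beta> z) \<in> CC (sublevel \<beta>') UNIV n" for \<beta>'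
    using assms sublevel_cong[of \<beta> \<beta>']
    by (auto simp: strand_lift[OF CC_sublevel_support[OF assms]] CC_zero)
qed (rule polyR_lift)

lemma aug_diff_lift:
  fixes z :: "'a list \<Rightarrow> 'k::field"
  assumes "z \<in> CC (sublevel \<beta>) UNIV n"
  shows "aug_diff hom_weight P n (lift \<beta> z) = lift \<beta> (aug_diff unit_weight (sublevel \<beta>) n z)"
proof (rule poly_chain_eqI)
  fix \<beta>'
  have "aug_diff unit_weight (sublevel \<beta>) n z \<tau> \<noteq> 0 \<Longrightarrow> le_below m (top_deg \<tau>) \<beta>" for \<tau>
    by (auto simp: aug_diff_def aug_cells_sublevel split: if_splits)
  then have "strand \<beta>' (lift \<beta> (aug_diff unit_weight (sublevel \<beta>) n z))
      = (if \<forall>i<m. \<beta> i = \<beta>' i then aug_diff unit_weight (sublevel \<beta>) n z else (\<lambda>_. 0))"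
    by (rule strand_lift)
  moreover have "strand \<beta>' (aug_diff hom_weight P n (lift \<beta> z))
      = aug_diff unit_weight (sublevel \<beta>') n (strand \<beta>' (lift \<beta> z))"
    using CC_support[OF lift_CC[OF assms]] by (rule strand_aug_diff)
  ultimately show "strand \<beta>' (aug_diff hom_weight P n (lift \<beta> z))
      = strand \<beta>' (lift \<beta> (aug_diff unit_weight (sublevel \<beta>) n z))"
    using sublevel_cong[of \<beta> \<beta>']
    by (cases "\<forall>i<m. \<beta> i = \<beta>' i") (simp_all add: strand_lift[OF CC_sublevel_support[OF assms]] aug_diff_zero)
qed (simp_all add: polyR_aug_diff polyR_lift)

lemma strand_cycles:
  fixes C :: "'a list \<Rightarrow> 'k::field mpoly"
  assumes "C \<in> cycles (polyR m) hom_weight P n"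
  shows "strand \<beta> C \<in> cycles UNIV unit_weight (sublevel \<beta>) n"
proof -
  have C: "C \<in> CC P (polyR m) n" and "aug_diff hom_weight P n C = (\<lambda>_. 0)"
    using assms by (auto simp: cycles_def)
  moreover have "strand \<beta> (aug_diff hom_weight P n C) = aug_diff unit_weight (sublevel \<beta>) n (strand \<beta> C)"
    using CC_support[OF C] by (rule strand_aug_diff)
  ultimately show ?thesis
    by (simp add: cycles_def strand_CC strand_zero)
qed

lemma cycles_of_strands:
  fixes C :: "'a list \<Rightarrow> 'k::field mpoly"
  assumes "\<And>\<sigma>. C \<sigma> \<in> polyR m" "\<And>\<sigma>. C \<sigma> \<noteq> 0 \<Longrightarrow> \<sigma> \<in> cells P n"
    and "\<And>\<beta>. strand \<beta> C \<in> cycles UNIV unit_weight (sublevel \<beta>) n"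
  shows "C \<in> cycles (polyR m) hom_weight P n"
proof -
  have "aug_diff hom_weight P n C = (\<lambda>_. 0)"
    using assms(3) by (intro poly_chain_eqI)
      (simp_all add: polyR_aug_diff assms(1) strand_aug_diff[OF assms(2)] strand_zero cycles_def)
  moreover have "strand \<beta> C \<in> CC (sublevel \<beta>) UNIV n" for \<beta>
    using assms(3)[of \<beta>] by (simp add: cycles_def)
  then have "C \<in> CC P (polyR m) n"
    using CC_of_strands[where C = C] assms(1,2) by blast
  ultimately show ?thesis
    by (simp add: cycles_def)
qed

lemma strand_boundaries:
  fixes C :: "'a list \<Rightarrow> 'k::field mpoly"
  assumes "C \<in> boundaries (polyR m) hom_weight P n"
  shows "strand \<beta> C \<in> boundaries UNIV unit_weight (sublevel \<beta>) n"
proof -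
  obtain W where W: "W \<in> CC P (polyR m) (Suc n)" and C: "C = aug_diff hom_weight P (Suc n) W"
    using assms by (auto simp: boundaries_def)
  have "strand \<beta> C = aug_diff unit_weight (sublevel \<beta>) (Suc n) (strand \<beta> W)"
    unfolding C using CC_support[OF W] by (rule strand_aug_diff)
  then show ?thesis
    using strand_CC[OF W] by (simp add: boundaries_def)
qed

lemma lift_zero: "lift \<beta> (\<lambda>_. 0) = (\<lambda>_. 0)"
  by (simp add: fun_eq_iff lift_eq_0)

lemma lift_cycles:
  "z \<in> cycles UNIV unit_weight (sublevel \<beta>) n \<Longrightarrow> lift \<beta> z \<in> cycles (polyR m) hom_weight P n"
  by (simp add: cycles_def lift_CC aug_diff_lift lift_zero)

lemma lift_boundaries:
  assumes "z \<in> boundaries UNIV unit_weight (sublevel \<beta>) n"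
  shows "lift \<beta> z \<in> boundaries (polyR m) hom_weight P n"
proof -
  obtain w where w: "w \<in> CC (sublevel \<beta>) UNIV (Suc n)"
    and z: "z = aug_diff unit_weight (sublevel \<beta>) (Suc n) w"
    using assms by (auto simp: boundaries_def)
  then have "lift \<beta> z = aug_diff hom_weight P (Suc n) (lift \<beta> w)"
    by (simp add: aug_diff_lift)
  then show ?thesis
    using lift_CC[OF w] by (simp add: boundaries_def)
qed

lemma finite_nonzero_strands:
  fixes C :: "'a list \<Rightarrow> 'k::field mpoly"
  assumes "\<And>\<sigma>. C \<sigma> \<noteq> 0 \<Longrightarrow> \<sigma> \<in> cells P n"
  shows "finite {\<beta>. (\<forall>i\<ge>m. \<beta> i = 0) \<and> strand \<beta> C \<noteq> (\<lambda>_. 0)}"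
proof (rule finite_subset)
  let ?deg = "\<lambda>(\<sigma>, \<mu>) i. if i < m then top_deg \<sigma> i + Poly_Mapping.lookup \<mu> i else 0"
  show "finite (?deg ` (SIGMA \<sigma>:cells P n. Poly_Mapping.keys (C \<sigma>)))"
    by (intro finite_imageI finite_SigmaI finite_cells finite_P) simp
  show "{\<beta>. (\<forall>i\<ge>m. \<beta> i = 0) \<and> strand \<beta> C \<noteq> (\<lambda>_. 0)}
      \<subseteq> ?deg ` (SIGMA \<sigma>:cells P n. Poly_Mapping.keys (C \<sigma>))"
  proof
    fix \<beta> assume "\<beta> \<in> {\<beta>. (\<forall>i\<ge>m. \<beta> i = 0) \<and> strand \<beta> C \<noteq> (\<lambda>_. 0)}"
    then obtain \<sigma> where \<beta>: "\<forall>i\<ge>m. \<beta> i = 0" and nz: "strand \<beta> C \<sigma> \<noteq> 0"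
      by (auto simp: fun_eq_iff)
    then have le: "le_below m (top_deg \<sigma>) \<beta>"
      by (auto simp: strand_def split: if_splits)
    define \<mu> where "\<mu> = expvec m (\<lambda>i. \<beta> i - top_deg \<sigma> i)"
    have "\<mu> \<in> Poly_Mapping.keys (C \<sigma>)"
      using nz le by (simp add: strand_def \<mu>_def in_keys_iff)
    moreover from this have "\<sigma> \<in> cells P n"
      using assms by (metis empty_iff keys_zero)
    moreover have "?deg (\<sigma>, \<mu>) = \<beta>"
      using le \<beta> by (auto simp: \<mu>_def lookup_expvec le_below_def fun_eq_iff)
    ultimately show "\<beta> \<in> ?deg ` (SIGMA \<sigma>:cells P n. Poly_Mapping.keys (C \<sigma>))"
      by force
  qed
qed

text \<open>Lift a preimage of each of the finitely many nonzero strands and add up. Strands only see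
  the components of a degree below m, so degrees are normalized to vanish from m on.\<close>

lemma boundaries_of_strands:
  fixes C :: "'a list \<Rightarrow> 'k::field mpoly"
  assumes C: "C \<in> CC P (polyR m) n"
    and strands: "\<And>\<beta>. strand \<beta> C \<in> boundaries UNIV unit_weight (sublevel \<beta>) n"
  shows "C \<in> boundaries (polyR m) hom_weight P n"
proof -
  have "\<exists>w. w \<in> CC (sublevel \<beta>) UNIV (Suc n) \<and>
      aug_diff unit_weight (sublevel \<beta>) (Suc n) w = strand \<beta> C" for \<beta>
    using strands[of \<beta>] by (force simp: boundaries_def)
  then obtain w where w: "\<And>\<beta>. w \<beta> \<in> CC (sublevel \<beta>) UNIV (Suc n)"
      "\<And>\<beta>. aug_diff unit_weight (sublevel \<beta>) (Suc n) (w \<beta>) = strand \<beta> C"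
    by metis
  define B where "B = {\<beta>. (\<forall>i\<ge>m. \<beta> i = 0) \<and> strand \<beta> C \<noteq> (\<lambda>_. 0)}"
  have B: "finite B"
    unfolding B_def using CC_support[OF C] by (rule finite_nonzero_strands)
  define W where "W = (\<Sum>\<beta>\<in>B. lift \<beta> (w \<beta>))"
  have W: "W \<in> CC P (polyR m) (Suc n)"
    unfolding W_def using B lift_CC[OF w(1)] by (rule CC_sum)
  have "aug_diff hom_weight P (Suc n) W = C"
  proof (rule poly_chain_eqI)
    fix \<beta>' :: "nat \<Rightarrow> nat"
    define \<beta> where "\<beta> i = (if i < m then \<beta>' i else 0)" for i
    have agree: "\<forall>i<m. \<beta> i = \<beta>' i" and vanish: "\<forall>i\<ge>m. \<beta> i = 0"
      by (simp_all add: \<beta>_def)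
    have "strand \<beta>' W = (\<Sum>\<gamma>\<in>B. if \<gamma> = \<beta> then w \<gamma> else 0)"
      unfolding W_def strand_sum
    proof (rule sum.cong[OF refl])
      fix \<gamma> assume "\<gamma> \<in> B"
      then have "(\<forall>i<m. \<gamma> i = \<beta>' i) \<longleftrightarrow> \<gamma> = \<beta>"
        using agree vanish by (auto simp: B_def fun_eq_iff not_less) (metis not_le)
      then show "strand \<beta>' (lift \<gamma> (w \<gamma>)) = (if \<gamma> = \<beta> then w \<gamma> else 0)"
        by (simp add: strand_lift[OF CC_sublevel_support[OF w(1)]] zero_fun_def)
    qed
    also have "\<dots> = (if \<beta> \<in> B then w \<beta> else 0)"
      using B by (simp add: sum.delta)
    finally have "strand \<beta>' (aug_diff hom_weight P (Suc n) W)
        = aug_diff unit_weight (sublevel \<beta>) (Suc n) (if \<beta> \<in> B then w \<beta> else (\<lambda>_. 0))"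
      using strand_aug_diff[where C = W and \<beta> = \<beta>', OF CC_support[OF W]] sublevel_cong[OF agree]
      by (simp add: zero_fun_def)
    also have "\<dots> = strand \<beta>' C"
      using w(2)[of \<beta>] fun_cong[OF strand_cong[OF agree], of C] vanish
      by (auto simp: B_def aug_diff_zero)
    finally show "strand \<beta>' (aug_diff hom_weight P (Suc n) W) = strand \<beta>' C" .
  qed (use C polyR_aug_diff W in \<open>auto simp: CC_def\<close>)
  then show ?thesis
    using W by (auto simp: boundaries_def)
qed

lemma exact_at_sublevel:
  assumes exact: "exact_at (polyR m :: 'k::field mpoly set) hom_weight P n"
  shows "exact_at (UNIV :: 'k set) unit_weight (sublevel \<beta>) n"
  unfolding exact_at_def
proof (intro equalityI subsetI)
  fix z :: "'a list \<Rightarrow> 'k" assume z: "z \<in> cycles UNIV unit_weight (sublevel \<beta>) n"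
  then have "lift \<beta> z \<in> boundaries (polyR m) hom_weight P n"
    using lift_cycles[OF z] exact by (simp add: exact_at_def)
  then have "strand \<beta> (lift \<beta> z) \<in> boundaries UNIV unit_weight (sublevel \<beta>) n"
    by (rule strand_boundaries)
  moreover have "strand \<beta> (lift \<beta> z) = z"
    using z CC_sublevel_support by (intro strand_lift_same) (auto simp: cycles_def)
  ultimately show "z \<in> boundaries UNIV unit_weight (sublevel \<beta>) n"
    by simp
next
  fix z :: "'a list \<Rightarrow> 'k" assume z: "z \<in> boundaries UNIV unit_weight (sublevel \<beta>) n"
  then have "lift \<beta> z \<in> cycles (polyR m) hom_weight P n"
    using lift_boundaries[OF z] exact by (simp add: exact_at_def)
  then have "strand \<beta> (lift \<beta> z) \<in> cycles UNIV unit_weight (sublevel \<beta>) n"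
    by (rule strand_cycles)
  moreover have "strand \<beta> (lift \<beta> z) = z"
    using z aug_diff_Suc_support cells_sublevel
    by (intro strand_lift_same) (fastforce simp: boundaries_def)
  ultimately show "z \<in> cycles UNIV unit_weight (sublevel \<beta>) n"
    by simp
qed

lemma exact_at_of_sublevels:
  assumes exact: "\<And>\<beta>. exact_at (UNIV :: 'k::field set) unit_weight (sublevel \<beta>) n"
  shows "exact_at (polyR m :: 'k mpoly set) hom_weight P n"
  unfolding exact_at_def
proof (intro equalityI subsetI)
  fix C :: "'a list \<Rightarrow> 'k mpoly" assume C: "C \<in> cycles (polyR m) hom_weight P n"
  have "strand \<beta> C \<in> boundaries UNIV unit_weight (sublevel \<beta>) n" for \<beta>
    using strand_cycles[OF C] exact by (simp add: exact_at_def)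
  then show "C \<in> boundaries (polyR m) hom_weight P n"
    using C by (intro boundaries_of_strands) (auto simp: cycles_def)
next
  fix C :: "'a list \<Rightarrow> 'k mpoly" assume C: "C \<in> boundaries (polyR m) hom_weight P n"
  then obtain W where "W \<in> CC P (polyR m) (Suc n)" "C = aug_diff hom_weight P (Suc n) W"
    by (auto simp: boundaries_def)
  then have "C \<sigma> \<in> polyR m" "C \<sigma> \<noteq> 0 \<Longrightarrow> \<sigma> \<in> cells P n" for \<sigma>
    using polyR_aug_diff aug_diff_Suc_support by (auto simp: CC_def)
  moreover have "strand \<beta> C \<in> cycles UNIV unit_weight (sublevel \<beta>) n" for \<beta>
    using strand_boundaries[OF C] exact by (simp add: exact_at_def)
  ultimately show "C \<in> cycles (polyR m) hom_weight P n"
    by (rule cycles_of_strands)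
qed

theorem exact_at_iff_strands:
  "exact_at (polyR m :: 'k::field mpoly set) hom_weight P n
    \<longleftrightarrow> (\<forall>\<beta>. exact_at (UNIV :: 'k set) unit_weight (sublevel \<beta>) n)"
  using exact_at_sublevel exact_at_of_sublevels by blast

lemma aug_diff_hweight: "n \<ge> 1 \<Longrightarrow> aug_diff (hweight m deg) P n = (aug_diff hom_weight P n :: _ \<Rightarrow> _ \<Rightarrow> 'k::field mpoly)"
  by (intro ext) (auto simp: aug_diff_def aug_cells_def hom_weight_def hweight_def top_deg_def
      cells_nonempty intro!: bdryw_cong)

theorem homog_resolution_iff:
  "homog_resolution m P deg TYPE('k::field) \<longleftrightarrow> (\<forall>n. exact_at (polyR m :: 'k mpoly set) hom_weight P n)"
proof -
  have "haug m P deg z = 0 \<longleftrightarrow> aug_diff hom_weight P 0 z = (\<lambda>_. 0)" for z :: "'a list \<Rightarrow> 'k mpoly"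
    unfolding aug_diff_0_eq_zero_iff haug_def
    by (intro arg_cong[where f = "\<lambda>x. x = 0"] sum.cong refl)
      (simp add: hom_weight_def top_deg_def cells_nonempty mult.commute)
  then have "homog_resolution m P deg TYPE('k) \<longleftrightarrow>
      exact_at (polyR m :: 'k mpoly set) hom_weight P 0 \<and> (\<forall>n\<ge>1. exact_at (polyR m :: 'k mpoly set) hom_weight P n)"
    unfolding homog_resolution_def exact_at_def cycles_def boundaries_def
    by (simp add: haug_image[OF finite_P] diffw_eq_aug_diff aug_diff_hweight conj_commute)
  then show ?thesis
    by (simp only: all_nat_iff_0_and_ge_1[symmetric])
qed

lemma sublevel_exact_iff:
  "(\<forall>n. exact_at (UNIV :: 'k::field set) unit_weight (sublevel \<beta>) n)
    \<longleftrightarrow> (sublevel \<beta> \<noteq> {} \<longrightarrow> aug_conic_exact (sublevel \<beta>) TYPE('k))"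
  by (cases "sublevel \<beta> = {}") (simp_all add: exact_at_empty aug_conic_exact_iff[OF finite_sublevel])

lemma int_sublevel_eq:
  assumes "{x \<in> P. \<forall>i<m. int (deg x i) \<le> \<alpha> i} \<noteq> {}"
  shows "{x \<in> P. \<forall>i<m. int (deg x i) \<le> \<alpha> i} = sublevel (\<lambda>i. nat (\<alpha> i))"
proof -
  obtain y where y: "\<forall>i<m. int (deg y i) \<le> \<alpha> i"
    using assms by auto
  have "\<alpha> i \<ge> 0" if "i < m" for i
    using y that of_nat_0_le_iff order_trans by blast
  then have "int (deg x i) \<le> \<alpha> i \<longleftrightarrow> deg x i \<le> nat (\<alpha> i)" if "i < m" for x i
    using that by (simp add: le_nat_iff)
  then show ?thesis
    by (auto simp: sublevel_def le_below_def)
qed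

lemma sublevel_eq_int: "sublevel \<beta> = {x \<in> P. \<forall>i<m. int (deg x i) \<le> int (\<beta> i)}"
  by (simp add: sublevel_def le_below_def)

lemma all_sublevels_iff_int:
  "(\<forall>\<beta>. sublevel \<beta> \<noteq> {} \<longrightarrow> Q (sublevel \<beta>)) \<longleftrightarrow>
    (\<forall>\<alpha> :: nat \<Rightarrow> int. {x \<in> P. \<forall>i<m. int (deg x i) \<le> \<alpha> i} \<noteq> {} \<longrightarrow>
      Q {x \<in> P. \<forall>i<m. int (deg x i) \<le> \<alpha> i})"
proof (intro iffI allI impI)
  fix \<alpha> :: "nat \<Rightarrow> int"
  assume Q: "\<forall>\<beta>. sublevel \<beta> \<noteq> {} \<longrightarrow> Q (sublevel \<beta>)"
    and ne: "{x \<in> P. \<forall>i<m. int (deg x i) \<le> \<alpha> i} \<noteq> {}"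
  have "Q (sublevel (\<lambda>i. nat (\<alpha> i)))"
    using Q ne int_sublevel_eq[OF ne] by auto
  then show "Q {x \<in> P. \<forall>i<m. int (deg x i) \<le> \<alpha> i}"
    by (rule ssubst[where P = Q, OF int_sublevel_eq[OF ne]])
next
  fix \<beta>
  assume "\<forall>\<alpha> :: nat \<Rightarrow> int. {x \<in> P. \<forall>i<m. int (deg x i) \<le> \<alpha> i} \<noteq> {} \<longrightarrow>
      Q {x \<in> P. \<forall>i<m. int (deg x i) \<le> \<alpha> i}"
  then have "sublevel \<beta> \<noteq> {} \<longrightarrow> Q (sublevel \<beta>)"
    unfolding sublevel_eq_int by (rule spec)
  moreover assume "sublevel \<beta> \<noteq> {}"
  ultimately show "Q (sublevel \<beta>)" by blast
qed

end

theorem mainTheorem3: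
  fixes P :: "'a::order set" and deg :: "'a \<Rightarrow> nat \<Rightarrow> nat" and m :: nat
  assumes "finite P"
    and "\<forall>a\<in>P. \<forall>b\<in>P. a \<le> b \<longrightarrow> (\<forall>i<m. deg a i \<le> deg b i)"
  shows "homog_resolution m P deg TYPE('k::field) \<longleftrightarrow>
    (\<forall>\<alpha> :: nat \<Rightarrow> int.
       {x \<in> P. \<forall>i<m. int (deg x i) \<le> \<alpha> i} \<noteq> {} \<longrightarrow>
       aug_conic_exact {x \<in> P. \<forall>i<m. int (deg x i) \<le> \<alpha> i} TYPE('k))"
proof -
  interpret monotone_degree P m deg
    using assms by unfold_locales (auto simp: le_below_def)
  have "homog_resolution m P deg TYPE('k) \<longleftrightarrow>
      (\<forall>n \<beta>. exact_at (UNIV :: 'k set) unit_weight (sublevel \<beta>) n)"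
    by (simp only: homog_resolution_iff exact_at_iff_strands)
  also have "\<dots> \<longleftrightarrow> (\<forall>\<beta> n. exact_at (UNIV :: 'k set) unit_weight (sublevel \<beta>) n)"
    by (rule all_comm)
  also have "\<dots> \<longleftrightarrow> (\<forall>\<beta>. sublevel \<beta> \<noteq> {} \<longrightarrow> aug_conic_exact (sublevel \<beta>) TYPE('k))"
    by (intro all_cong1 sublevel_exact_iff)
  also have "\<dots> \<longleftrightarrow> (\<forall>\<alpha> :: nat \<Rightarrow> int.
       {x \<in> P. \<forall>i<m. int (deg x i) \<le> \<alpha> i} \<noteq> {} \<longrightarrow>
       aug_conic_exact {x \<in> P. \<forall>i<m. int (deg x i) \<le> \<alpha> i} TYPE('k))"
    by (rule all_sublevels_iff_int)
  finally show ?thesis .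
qed

end
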